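(* For every integer $n>1$, $$c_n(231,1423 : 231)=c_n(312,2314 : 312)=\begin{cases}\frac{7}{3}\cdot 4^{k-1}-\frac{1}{3} & \text{if } n=2k,\\ \frac{14}{3}\cdot 4^{k-1}-\frac{2}{3} & \text{if } n=2k+1.\end{cases}$$
   Context: $S_n$ is the symmetric group on $[n]=\{1,\dots,n\}$, and a permutation $\pi\in S_n$ is written in one-line notation $\pi=\pi_1\pi_2\cdots\pi_n$ with $\pi_i=\pi(i)$. For $\tau\in S_k$, $k\le n$, $\pi$ contains $\tau$ if there are indices $i_1<\dots<i_k$ with $\pi_{i_s}>\pi_{i_t}$ iff $\tau_s>\tau_t$ for all $1\le s<t\le k$; otherwise $\pi$ avoids $\tau$. $\pi^2$ denotes the composition $\pi\circ\pi$. For patterns $\sigma_1,\sigma_2,\rho$, $c_n(\sigma_1,\sigma_2 : \rho)$ denotes the number of permutations $\pi\in S_n$ such that $\pi$ avoids both $\sigma_1$ and $\sigma_2$ and $\pi^2$ avoids $\rho$. *)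

theory Defs
  imports Complex_Main "HOL-Combinatorics.Permutations"
begin

text \<open>A pattern tau in S_k is given by its one-line notation as a list
  [tau_1, ..., tau_k] (0-indexed list, values in {1..k}).\<close>

definition perms :: "nat \<Rightarrow> (nat \<Rightarrow> nat) set" where
  "perms n = {p. p permutes {1..n}}"

definition contains :: "nat \<Rightarrow> (nat \<Rightarrow> nat) \<Rightarrow> nat list \<Rightarrow> bool" where
  "contains n p tau \<longleftrightarrow>
     (\<exists>i :: nat \<Rightarrow> nat.
        (\<forall>s t. 1 \<le> s \<and> s < t \<and> t \<le> length tau \<longrightarrow> i s < i t) \<and>
        (\<forall>s. 1 \<le> s \<and> s \<le> length tau \<longrightarrow> i s \<in> {1..n}) \<and>
        (\<forall>s t. 1 \<le> s \<and> s < t \<and> t \<le> length tau \<longrightarrow>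
            (p (i s) > p (i t) \<longleftrightarrow> tau ! (s - 1) > tau ! (t - 1))))"

definition avoids :: "nat \<Rightarrow> (nat \<Rightarrow> nat) \<Rightarrow> nat list \<Rightarrow> bool" where
  "avoids n p tau \<longleftrightarrow> \<not> contains n p tau"

definition c :: "nat \<Rightarrow> nat list \<Rightarrow> nat list \<Rightarrow> nat list \<Rightarrow> nat" where
  "c n s1 s2 rho = card {p \<in> perms n. avoids n p s1 \<and> avoids n p s2 \<and> avoids n (p \<circ> p) rho}"

end

theory Submission
  imports Defs
begin

text \<open>
  Let p be a permutation of {1..n} that avoids 231 and 1423 and whose square avoids 231, and let
  q be the position of n. If q > 1, avoiding 231 forces the entries before n to be 1, ..., q - 1,
  and avoiding 1423, with the first entry in the role of the 1, forces the entries after n to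
  decrease; so p is a shorter such permutation followed by n, n - 1, ..., q. If q = 1, p starts
  with a maximal decreasing run n, n - 1, ..., s + 1, and a case analysis on the position of s,
  in which every bad case produces a 231 in p \<circ> p, shows p = n, n - 1, ..., s + 1, 1, 2, ..., s
  with s = 0 or 2 \<le> s \<le> n / 2. All these permutations qualify. Hence the counts a n satisfy
  a n = \<lfloor>n / 2\<rfloor> + a 1 + ... + a (n - 1) for n \<ge> 2, that is a (n + 1) = 2 a n + [n odd],
  which solves to the closed forms. The second count is the first one transported by
  reverse-complement, which turns 231 and 1423 into 312 and 2314 and commutes with squaring.
\<close>

section \<open>Occurrences of patterns of length three and four\<close>

lemma containsE:
  assumes "contains n p tau"
  obtains i where "\<And>s t. 1 \<le> s \<Longrightarrow> s < t \<Longrightarrow> t \<le> length tau \<Longrightarrow> i s < i t"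
    and "\<And>s. 1 \<le> s \<Longrightarrow> s \<le> length tau \<Longrightarrow> i s \<in> {1..n}"
    and "\<And>s t. 1 \<le> s \<Longrightarrow> s < t \<Longrightarrow> t \<le> length tau \<Longrightarrow>
           p (i t) < p (i s) \<longleftrightarrow> tau ! (t - 1) < tau ! (s - 1)"
  using assms unfolding contains_def by blast

lemma contains_if_index_list:
  assumes "length is = length tau" and "sorted_wrt (<) is" and "set is \<subseteq> {1..n}"
    and "\<forall>t < length tau. \<forall>s < t. p (is ! t) < p (is ! s) \<longleftrightarrow> tau ! t < tau ! s"
  shows "contains n p tau"
  unfolding contains_def
proof (intro exI[of _ "\<lambda>s. is ! (s - 1)"] conjI allI impI)
  fix s t assume "1 \<le> s \<and> s < t \<and> t \<le> length tau"
  then show "is ! (s - 1) < is ! (t - 1)"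
    and "p (is ! (s - 1)) > p (is ! (t - 1)) \<longleftrightarrow> tau ! (s - 1) > tau ! (t - 1)"
    using assms by (auto simp: sorted_wrt_iff_nth_less)
next
  fix s assume "1 \<le> s \<and> s \<le> length tau"
  then have "is ! (s - 1) \<in> set is" using assms(1) by (intro nth_mem) auto
  then show "is ! (s - 1) \<in> {1..n}" using assms(3) by blast
qed

lemma contains_length3_iff:
  "contains n p [x, y, z] \<longleftrightarrow>
    (\<exists>a b c. 1 \<le> a \<and> a < b \<and> b < c \<and> c \<le> n \<and>
      (p b < p a \<longleftrightarrow> y < x) \<and> (p c < p a \<longleftrightarrow> z < x) \<and> (p c < p b \<longleftrightarrow> z < y))"
  (is "_ \<longleftrightarrow> (\<exists>a b c. ?occ a b c)")
proof
  assume "contains n p [x, y, z]"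
  then obtain i where mono: "\<And>s t. 1 \<le> s \<Longrightarrow> s < t \<Longrightarrow> t \<le> length [x, y, z] \<Longrightarrow> i s < i t"
    and range: "\<And>s. 1 \<le> s \<Longrightarrow> s \<le> length [x, y, z] \<Longrightarrow> i s \<in> {1..n}"
    and order: "\<And>s t. 1 \<le> s \<Longrightarrow> s < t \<Longrightarrow> t \<le> length [x, y, z] \<Longrightarrow>
           p (i t) < p (i s) \<longleftrightarrow> [x, y, z] ! (t - 1) < [x, y, z] ! (s - 1)"
    using containsE by blast
  have "?occ (i 1) (i 2) (i 3)"
    using mono[of 1 2] mono[of 2 3] range[of 1] range[of 3] order[of 1 2] order[of 1 3] order[of 2 3]
    by (simp add: numeral_eq_Suc)
  then show "\<exists>a b c. ?occ a b c" by blast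
next
  assume "\<exists>a b c. ?occ a b c"
  then obtain a b c where "?occ a b c" by blast
  then show "contains n p [x, y, z]"
    by (intro contains_if_index_list[of "[a, b, c]"]) (auto simp: All_less_Suc numeral_eq_Suc)
qed

lemma contains_length4_iff:
  "contains n p [x, y, z, w] \<longleftrightarrow>
    (\<exists>a b c d. 1 \<le> a \<and> a < b \<and> b < c \<and> c < d \<and> d \<le> n \<and>
      (p b < p a \<longleftrightarrow> y < x) \<and> (p c < p a \<longleftrightarrow> z < x) \<and> (p d < p a \<longleftrightarrow> w < x) \<and>
      (p c < p b \<longleftrightarrow> z < y) \<and> (p d < p b \<longleftrightarrow> w < y) \<and> (p d < p c \<longleftrightarrow> w < z))"
  (is "_ \<longleftrightarrow> (\<exists>a b c d. ?occ a b c d)")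
proof
  assume "contains n p [x, y, z, w]"
  then obtain i where mono: "\<And>s t. 1 \<le> s \<Longrightarrow> s < t \<Longrightarrow> t \<le> length [x, y, z, w] \<Longrightarrow> i s < i t"
    and range: "\<And>s. 1 \<le> s \<Longrightarrow> s \<le> length [x, y, z, w] \<Longrightarrow> i s \<in> {1..n}"
    and order: "\<And>s t. 1 \<le> s \<Longrightarrow> s < t \<Longrightarrow> t \<le> length [x, y, z, w] \<Longrightarrow>
           p (i t) < p (i s) \<longleftrightarrow> [x, y, z, w] ! (t - 1) < [x, y, z, w] ! (s - 1)"
    using containsE by blast
  have "?occ (i 1) (i 2) (i 3) (i 4)"
    using mono[of 1 2] mono[of 2 3] mono[of 3 4] range[of 1] range[of 4]
      order[of 1 2] order[of 1 3] order[of 1 4] order[of 2 3] order[of 2 4] order[of 3 4]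
    by (simp add: numeral_eq_Suc)
  then show "\<exists>a b c d. ?occ a b c d" by blast
next
  assume "\<exists>a b c d. ?occ a b c d"
  then obtain a b c d where "?occ a b c d" by blast
  then show "contains n p [x, y, z, w]"
    by (intro contains_if_index_list[of "[a, b, c, d]"]) (auto simp: All_less_Suc numeral_eq_Suc)
qed

lemma contains_231_iff:
  assumes "inj_on p {1..n}"
  shows "contains n p [2, 3, 1] \<longleftrightarrow>
    (\<exists>a b c. 1 \<le> a \<and> a < b \<and> b < c \<and> c \<le> n \<and> p c < p a \<and> p a < p b)"
proof -
  have "(1 \<le> a \<and> a < b \<and> b < c \<and> c \<le> n \<and>
      (p b < p a \<longleftrightarrow> 3 < (2::nat)) \<and> (p c < p a \<longleftrightarrow> 1 < (2::nat)) \<and> (p c < p b \<longleftrightarrow> 1 < (3::nat))) \<longleftrightarrow>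
    (1 \<le> a \<and> a < b \<and> b < c \<and> c \<le> n \<and> p c < p a \<and> p a < p b)" for a b c
    using inj_onD[OF assms, of a b] by (auto simp: not_less le_less)
  then show ?thesis
    unfolding contains_length3_iff by presburger
qed

lemma contains_1423_iff:
  assumes "inj_on p {1..n}"
  shows "contains n p [1, 4, 2, 3] \<longleftrightarrow>
    (\<exists>a b c d. 1 \<le> a \<and> a < b \<and> b < c \<and> c < d \<and> d \<le> n \<and> p a < p c \<and> p c < p d \<and> p d < p b)"
proof -
  have "(1 \<le> a \<and> a < b \<and> b < c \<and> c < d \<and> d \<le> n \<and>
      (p b < p a \<longleftrightarrow> 4 < (1::nat)) \<and> (p c < p a \<longleftrightarrow> 2 < (1::nat)) \<and> (p d < p a \<longleftrightarrow> 3 < (1::nat)) \<and>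
      (p c < p b \<longleftrightarrow> 2 < (4::nat)) \<and> (p d < p b \<longleftrightarrow> 3 < (4::nat)) \<and> (p d < p c \<longleftrightarrow> 3 < (2::nat))) \<longleftrightarrow>
    (1 \<le> a \<and> a < b \<and> b < c \<and> c < d \<and> d \<le> n \<and> p a < p c \<and> p c < p d \<and> p d < p b)" for a b c d
    using inj_onD[OF assms, of a c] inj_onD[OF assms, of c d] by (auto simp: not_less le_less)
  then show ?thesis
    unfolding contains_length4_iff by presburger
qed

lemma contains_prefix:
  assumes "k \<le> n" and agree: "\<And>i. i \<in> {1..k} \<Longrightarrow> f i = g i" and "contains k f tau"
  shows "contains n g tau"
proof -
  obtain i where "\<forall>s t. 1 \<le> s \<and> s < t \<and> t \<le> length tau \<longrightarrow> i s < i t"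
    and range: "\<forall>s. 1 \<le> s \<and> s \<le> length tau \<longrightarrow> i s \<in> {1..k}"
    and "\<forall>s t. 1 \<le> s \<and> s < t \<and> t \<le> length tau \<longrightarrow>
           (f (i s) > f (i t) \<longleftrightarrow> tau ! (s - 1) > tau ! (t - 1))"
    using assms(3) unfolding contains_def by blast
  moreover have "g (i s) = f (i s)" if "1 \<le> s" "s \<le> length tau" for s
    using agree range that by simp
  ultimately show ?thesis
    unfolding contains_def using \<open>k \<le> n\<close> by (intro exI[of _ i]) force
qed

section \<open>Reverse-complement symmetry\<close>

definition flip :: "nat \<Rightarrow> nat \<Rightarrow> nat" where
  "flip n i = (if i \<in> {1..n} then n + 1 - i else i)"

definition revcomp :: "nat \<Rightarrow> (nat \<Rightarrow> nat) \<Rightarrow> nat \<Rightarrow> nat" where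
  "revcomp n p = flip n \<circ> p \<circ> flip n"

definition revcomp_pattern :: "nat list \<Rightarrow> nat list" where
  "revcomp_pattern tau = rev (map (\<lambda>x. length tau + 1 - x) tau)"

lemma flip_flip [simp]: "flip n (flip n i) = i"
  by (auto simp: flip_def)

lemma flip_permutes: "flip n permutes {1..n}"
  unfolding permutes_def by (metis flip_def flip_flip)

lemma revcomp_permutes: "p permutes {1..n} \<Longrightarrow> revcomp n p permutes {1..n}"
  unfolding revcomp_def by (intro permutes_compose flip_permutes)

lemma revcomp_revcomp [simp]: "revcomp n (revcomp n p) = p"
  by (simp add: revcomp_def fun_eq_iff)

lemma revcomp_comp: "revcomp n (p \<circ> q) = revcomp n p \<circ> revcomp n q"
  by (simp add: revcomp_def fun_eq_iff)

lemma length_revcomp_pattern [simp]: "length (revcomp_pattern tau) = length tau"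
  by (simp add: revcomp_pattern_def)

lemma revcomp_pattern_revcomp_pattern:
  "set tau \<subseteq> {1..length tau} \<Longrightarrow> revcomp_pattern (revcomp_pattern tau) = tau"
  by (auto simp: revcomp_pattern_def rev_map comp_def intro!: map_idI)

lemma revcomp_pattern_pattern:
  "set tau \<subseteq> {1..length tau} \<Longrightarrow> set (revcomp_pattern tau) \<subseteq> {1..length (revcomp_pattern tau)}"
  by (auto simp: revcomp_pattern_def subset_iff)

lemma revcomp_less_iff:
  assumes "p permutes {1..n}" and "x \<in> {1..n}" and "y \<in> {1..n}"
  shows "revcomp n p (n + 1 - x) < revcomp n p (n + 1 - y) \<longleftrightarrow> p y < p x"
proof -
  have "p x \<in> {1..n}" "p y \<in> {1..n}" using assms(2,3) permutes_in_image[OF assms(1)] by simp_all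
  with assms(2,3) show ?thesis by (auto simp: revcomp_def flip_def)
qed

lemma revcomp_pattern_less_iff:
  assumes "set tau \<subseteq> {1..length tau}" and "s \<in> {1..length tau}" and "t \<in> {1..length tau}"
  shows "revcomp_pattern tau ! (s - 1) < revcomp_pattern tau ! (t - 1) \<longleftrightarrow>
    tau ! (length tau - t) < tau ! (length tau - s)"
proof -
  have "tau ! (length tau - s) \<in> set tau" "tau ! (length tau - t) \<in> set tau"
    using assms(2,3) by (auto intro: nth_mem)
  then have "tau ! (length tau - s) \<le> length tau" "tau ! (length tau - t) \<le> length tau"
    using assms(1) by auto
  with assms(2,3) show ?thesis by (auto simp: revcomp_pattern_def rev_nth)
qed

lemma contains_revcomp:
  assumes perm: "p permutes {1..n}" and pattern: "set tau \<subseteq> {1..length tau}"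
    and "contains n p tau"
  shows "contains n (revcomp n p) (revcomp_pattern tau)"
proof -
  define k where "k = length tau"
  obtain i where mono: "\<And>s t. 1 \<le> s \<Longrightarrow> s < t \<Longrightarrow> t \<le> k \<Longrightarrow> i s < i t"
    and range: "\<And>s. 1 \<le> s \<Longrightarrow> s \<le> k \<Longrightarrow> i s \<in> {1..n}"
    and order: "\<And>s t. 1 \<le> s \<Longrightarrow> s < t \<Longrightarrow> t \<le> k \<Longrightarrow>
                  p (i t) < p (i s) \<longleftrightarrow> tau ! (t - 1) < tau ! (s - 1)"
    using containsE[OF assms(3)] unfolding k_def by blast
  show ?thesis
    unfolding contains_def length_revcomp_pattern k_def[symmetric]
  proof (intro exI[of _ "\<lambda>s. n + 1 - i (k + 1 - s)"] conjI allI impI)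
    fix s t assume st: "1 \<le> s \<and> s < t \<and> t \<le> k"
    then have idx: "1 \<le> k + 1 - t" "k + 1 - t < k + 1 - s" "k + 1 - s \<le> k"
      and letters: "k + 1 - s - 1 = k - s" "k + 1 - t - 1 = k - t" by auto
    then have "i (k + 1 - t) < i (k + 1 - s)" "i (k + 1 - s) \<in> {1..n}" "i (k + 1 - t) \<in> {1..n}"
      using mono range by auto
    then show "n + 1 - i (k + 1 - s) < n + 1 - i (k + 1 - t)" by auto
    show "revcomp n p (n + 1 - i (k + 1 - s)) > revcomp n p (n + 1 - i (k + 1 - t)) \<longleftrightarrow>
        revcomp_pattern tau ! (s - 1) > revcomp_pattern tau ! (t - 1)"
      using revcomp_less_iff[OF perm \<open>i (k + 1 - t) \<in> {1..n}\<close> \<open>i (k + 1 - s) \<in> {1..n}\<close>]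
        order[OF idx] revcomp_pattern_less_iff[OF pattern, of t s] st letters
      by (simp add: k_def)
  next
    fix s assume "1 \<le> s \<and> s \<le> k"
    then have "i (k + 1 - s) \<in> {1..n}" by (intro range) auto
    then show "n + 1 - i (k + 1 - s) \<in> {1..n}" by auto
  qed
qed

lemma avoids_revcomp_iff:
  assumes "p permutes {1..n}" and "set tau \<subseteq> {1..length tau}"
  shows "avoids n (revcomp n p) (revcomp_pattern tau) \<longleftrightarrow> avoids n p tau"
  using contains_revcomp[OF assms]
    contains_revcomp[OF revcomp_permutes[OF assms(1)] revcomp_pattern_pattern[OF assms(2)]]
  by (auto simp: avoids_def revcomp_pattern_revcomp_pattern[OF assms(2)])

lemma c_revcomp_pattern:
  assumes "set s1 \<subseteq> {1..length s1}" and "set s2 \<subseteq> {1..length s2}"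
    and "set rho \<subseteq> {1..length rho}"
  shows "c n (revcomp_pattern s1) (revcomp_pattern s2) (revcomp_pattern rho) = c n s1 s2 rho"
proof -
  let ?A = "{p \<in> perms n. avoids n p s1 \<and> avoids n p s2 \<and> avoids n (p \<circ> p) rho}"
  let ?B = "{p \<in> perms n. avoids n p (revcomp_pattern s1) \<and> avoids n p (revcomp_pattern s2) \<and>
               avoids n (p \<circ> p) (revcomp_pattern rho)}"
  have revcomp_mem: "revcomp n p \<in> ?B \<longleftrightarrow> p \<in> ?A" if "p permutes {1..n}" for p
    using that revcomp_permutes[OF that] avoids_revcomp_iff[OF that assms(1)]
      avoids_revcomp_iff[OF that assms(2)] avoids_revcomp_iff[OF permutes_compose[OF that that] assms(3)]
    by (simp add: perms_def flip: revcomp_comp)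
  have "revcomp n p \<in> ?B" if "p \<in> ?A" for p
    using that revcomp_mem[of p] unfolding perms_def by blast
  moreover have "revcomp n p \<in> ?A" if "p \<in> ?B" for p
    using that revcomp_mem[of "revcomp n p"] revcomp_permutes[of p n] unfolding perms_def by auto
  ultimately have "bij_betw (revcomp n) ?A ?B"
    by (intro bij_betw_byWitness[where f' = "revcomp n"]) auto
  then show ?thesis unfolding c_def by (simp add: bij_betw_same_card)
qed

section \<open>Monotone runs and 231-avoiding blocks\<close>

(* The entries left of the maximum lie below all entries right of it, so they form an initial
   segment of the values. *)
lemma max_split_avoiding_231:
  fixes p :: "nat \<Rightarrow> nat"
  assumes inj: "inj_on p {L..R}" and onto: "p ` {L..R} = {1..R + 1 - L}"
    and q: "q \<in> {L..R}" "p q = R + 1 - L"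
    and no231: "\<And>x y z. L \<le> x \<Longrightarrow> x < y \<Longrightarrow> y < z \<Longrightarrow> z \<le> R \<Longrightarrow> \<not> (p z < p x \<and> p x < p y)"
  shows "p ` {L..<q} = {1..q - L}" and "\<And>j. j \<in> {q<..R} \<Longrightarrow> q - L < p j \<and> p j < R + 1 - L"
proof -
  have below_peak: "p i < R + 1 - L" if "i \<in> {L..R}" "i \<noteq> q" for i
  proof -
    have "p i \<in> {1..R + 1 - L}" using onto that by blast
    moreover have "p i \<noteq> p q" using inj_onD[OF inj, of i q] that q by auto
    ultimately show ?thesis using q by auto
  qed
  have left_below_right: "p i < p j" if "i \<in> {L..<q}" "j \<in> {q<..R}" for i j
    using that no231[of i q j] below_peak[of i] q inj_onD[OF inj, of i j] by fastforce
  have card_left: "card (p ` {L..<q}) = q - L"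
    using q by (subst card_image) (auto intro: inj_on_subset[OF inj])
  have "p i \<le> q - L" if i: "i \<in> {L..<q}" for i
  proof -
    have "{1..p i} \<subseteq> p ` {L..<q}"
    proof
      fix u assume u: "u \<in> {1..p i}"
      then have "u \<in> p ` {L..R}" using onto below_peak[of i] i q by auto
      then obtain x where x: "x \<in> {L..R}" "p x = u" by blast
      have "x \<noteq> q" using x u below_peak[of i] i q by auto
      moreover have "x \<notin> {q<..R}" using left_below_right[OF i, of x] x u by auto
      ultimately show "u \<in> p ` {L..<q}" using x by auto
    qed
    from card_mono[OF _ this] show ?thesis using card_left by simp
  qed
  moreover have "p ` {L..<q} \<subseteq> {1..R + 1 - L}" using onto q by auto
  ultimately have "p ` {L..<q} \<subseteq> {1..q - L}" by auto
  then show left: "p ` {L..<q} = {1..q - L}"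
    by (intro card_subset_eq) (simp_all add: card_left)
  fix j assume j: "j \<in> {q<..R}"
  have "p j \<notin> p ` {L..<q}" using j q inj by (auto dest: inj_onD)
  then show "q - L < p j \<and> p j < R + 1 - L"
    using j q left below_peak[of j] onto by force
qed

lemma strict_antimono_on_interval_values:
  fixes f :: "nat \<Rightarrow> nat"
  assumes dec: "strict_antimono_on {lo..hi} f" and range: "f ` {lo..hi} \<subseteq> {A..B}"
    and length: "B + lo = A + hi" and i: "i \<in> {lo..hi}"
  shows "f i + i = B + lo"
proof -
  have gap: "f b + (b - a) \<le> f a" if "lo \<le> a" "a \<le> b" "b \<le> hi" for a b
    using that(2,3)
  proof (induction b rule: dec_induct)
    case (step b)
    then show ?case using monotone_onD[OF dec, of b "Suc b"] that(1) by simp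
  qed simp
  moreover have "f lo \<le> B" "A \<le> f hi" using range i by (auto simp: image_subset_iff)
  ultimately show ?thesis using gap[of lo i] gap[of i hi] i length by fastforce
qed

lemma strict_mono_on_interval_values:
  fixes f :: "nat \<Rightarrow> nat"
  assumes inc: "strict_mono_on {lo..hi} f" and range: "f ` {lo..hi} \<subseteq> {A..B}"
    and length: "B + lo = A + hi" and i: "i \<in> {lo..hi}"
  shows "f i + lo = A + i"
proof -
  have gap: "f a + (b - a) \<le> f b" if "lo \<le> a" "a \<le> b" "b \<le> hi" for a b
    using that(2,3)
  proof (induction b rule: dec_induct)
    case (step b)
    then show ?case using monotone_onD[OF inc, of b "Suc b"] that(1) by simp
  qed simp
  moreover have "A \<le> f lo" "f hi \<le> B" using range i by (auto simp: image_subset_iff)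
  ultimately show ?thesis using gap[of lo i] gap[of i hi] i length by fastforce
qed

lemma image_after_top_run:
  fixes p :: "nat \<Rightarrow> nat"
  assumes perm: "p permutes {1..n}" and run: "\<And>i. i \<in> {1..d} \<Longrightarrow> p i = n + 1 - i"
    and "d \<le> n"
  shows "p ` {d + 1..n} = {1..n - d}"
proof -
  have "p ` {1..d} = {n - d + 1..n}"
  proof
    show "p ` {1..d} \<subseteq> {n - d + 1..n}"
    proof (rule image_subsetI)
      fix i assume "i \<in> {1..d}"
      then show "p i \<in> {n - d + 1..n}" using run[of i] \<open>d \<le> n\<close> by auto
    qed
    show "{n - d + 1..n} \<subseteq> p ` {1..d}"
    proof
      fix v assume v: "v \<in> {n - d + 1..n}"
      then have i: "n + 1 - v \<in> {1..d}" by auto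
      moreover have "p (n + 1 - v) = v" using run[OF i] v by auto
      ultimately show "v \<in> p ` {1..d}" by force
    qed
  qed
  moreover have "p ` ({1..n} - {1..d}) = p ` {1..n} - p ` {1..d}"
    by (rule inj_on_image_set_diff[OF permutes_inj_on[OF perm]]) (use \<open>d \<le> n\<close> in auto)
  moreover have "{1..n} - {1..d} = {d + 1..n}" by auto
  ultimately show ?thesis using permutes_image[OF perm] by auto
qed

lemma maximal_top_run:
  fixes p :: "nat \<Rightarrow> nat"
  assumes "p 1 = n" and "1 \<le> n"
  obtains d where "1 \<le> d" "d \<le> n" "\<And>i. i \<in> {1..d} \<Longrightarrow> p i = n + 1 - i"
    and "d < n \<Longrightarrow> p (d + 1) \<noteq> n - d"
proof -
  define D where "D = {d \<in> {1..n}. \<forall>i \<in> {1..d}. p i = n + 1 - i}"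
  define d where "d = Max D"
  have "D \<subseteq> {1..n}" by (auto simp: D_def)
  then have "finite D" by (rule finite_subset) simp
  moreover have "1 \<in> D" using assms by (simp add: D_def)
  ultimately have "d \<in> D" unfolding d_def by (intro Max_in) auto
  then have d: "1 \<le> d" "d \<le> n" "\<And>i. i \<in> {1..d} \<Longrightarrow> p i = n + 1 - i"
    by (auto simp: D_def)
  have maximal: "p (d + 1) \<noteq> n - d" if "d < n"
  proof
    assume last: "p (d + 1) = n - d"
    have "d + 1 \<in> D" unfolding D_def
    proof (intro CollectI conjI ballI)
      show "d + 1 \<in> {1..n}" using that by simp
      fix i assume "i \<in> {1..d + 1}"
      then show "p i = n + 1 - i" using d(3)[of i] last by (cases "i = d + 1") auto
    qed
    then show False using Max_ge[OF \<open>finite D\<close>, of "d + 1"] unfolding d_def by simp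
  qed
  show ?thesis by (rule that[of d]) (use d maximal in auto)
qed

section \<open>Decomposition by the position of the maximum\<close>

definition Av :: "nat \<Rightarrow> (nat \<Rightarrow> nat) set" where
  "Av n = {p \<in> perms n. avoids n p [2, 3, 1] \<and> avoids n p [1, 4, 2, 3] \<and> avoids n (p \<circ> p) [2, 3, 1]}"

lemma Av_iff:
  "p \<in> Av n \<longleftrightarrow> p permutes {1..n} \<and>
     (\<forall>x y z. 1 \<le> x \<and> x < y \<and> y < z \<and> z \<le> n \<longrightarrow> \<not> (p z < p x \<and> p x < p y)) \<and>
     (\<forall>x y z w. 1 \<le> x \<and> x < y \<and> y < z \<and> z < w \<and> w \<le> n \<longrightarrow>
        \<not> (p x < p z \<and> p z < p w \<and> p w < p y)) \<and>
     (\<forall>x y z. 1 \<le> x \<and> x < y \<and> y < z \<and> z \<le> n \<longrightarrow>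
        \<not> (p (p z) < p (p x) \<and> p (p x) < p (p y)))"
proof (cases "p permutes {1..n}")
  case True
  then have inj: "inj_on p {1..n}" and inj2: "inj_on (p \<circ> p) {1..n}"
    using permutes_inj_on permutes_compose by blast+
  show ?thesis
    unfolding Av_def perms_def avoids_def mem_Collect_eq
      contains_231_iff[OF inj] contains_231_iff[OF inj2] contains_1423_iff[OF inj]
    using True by auto
qed (simp add: Av_def perms_def)

lemma Av_permutes: "p \<in> Av n \<Longrightarrow> p permutes {1..n}"
  by (simp add: Av_iff)

lemma Av_prefix:
  assumes p: "p \<in> Av n" and "k \<le> n" and closed: "p ` {1..k} = {1..k}"
  shows "(\<lambda>i. if i \<in> {1..k} then p i else i) \<in> Av k" (is "?a \<in> _")
proof -
  note perm = Av_permutes[OF p]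
  have "inj_on p {1..k}"
    by (rule inj_on_subset[OF permutes_inj_on[OF perm]]) (use \<open>k \<le> n\<close> in auto)
  then have "inj_on ?a {1..k}" by (rule inj_on_cong[THEN iffD1, rotated]) simp
  then have "?a permutes {1..k}"
    using closed by (intro inj_imp_permutes) auto
  moreover have "avoids k ?a tau" if "avoids n p tau" for tau
    using that contains_prefix[OF \<open>k \<le> n\<close>, of ?a p] by (auto simp: avoids_def)
  moreover have "avoids k (?a \<circ> ?a) tau" if "avoids n (p \<circ> p) tau" for tau
  proof -
    have "(?a \<circ> ?a) i = (p \<circ> p) i" if "i \<in> {1..k}" for i
      using that closed by (auto simp del: atLeastAtMost_iff)
    then show ?thesis
      using that contains_prefix[OF \<open>k \<le> n\<close>, of "?a \<circ> ?a" "p \<circ> p"] by (auto simp: avoids_def)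
  qed
  ultimately show ?thesis using p by (simp add: Av_def perms_def)
qed

(* n, n - 1, ..., s + 1, 1, 2, ..., s in one-line notation *)
definition desc_asc :: "nat \<Rightarrow> nat \<Rightarrow> nat \<Rightarrow> nat" where
  "desc_asc n s i =
     (if i \<in> {1..n - s} then n + 1 - i else if i \<in> {n - s<..n} then i - (n - s) else i)"

(* s = 1 is left out: desc_asc n 1 and desc_asc n 0 are both the reversal. *)
definition tail_lengths :: "nat \<Rightarrow> nat set" where
  "tail_lengths n = {s. 2 * s \<le> n \<and> s \<noteq> 1}"

(* a 1, ..., a k, n, n - 1, ..., k + 1 in one-line notation *)
definition append_desc :: "nat \<Rightarrow> nat \<Rightarrow> (nat \<Rightarrow> nat) \<Rightarrow> nat \<Rightarrow> nat" where
  "append_desc n k a i = (if i \<in> {k<..n} then n + k + 1 - i else a i)"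

lemma desc_asc_permutes: "desc_asc n s permutes {1..n}"
proof (rule inj_imp_permutes)
  show "inj_on (desc_asc n s) {1..n}"
  proof (rule inj_onI)
    fix i j assume "i \<in> {1..n}" "j \<in> {1..n}" "desc_asc n s i = desc_asc n s j"
    then show "i = j"
      by (cases "i \<le> n - s"; cases "j \<le> n - s") (auto simp: desc_asc_def)
  qed
qed (auto simp: desc_asc_def)

lemma desc_asc_twice:
  assumes "2 * s \<le> n" and "i \<in> {1..n}"
  shows "desc_asc n s (desc_asc n s i) =
    (if i \<le> s then s + 1 - i else if i \<le> n - s then i else 2 * n - s + 1 - i)"
  using assms by (auto simp: desc_asc_def)

lemma desc_asc_in_Av:
  assumes "2 * s \<le> n"
  shows "desc_asc n s \<in> Av n"
proof -
  have "\<not> (desc_asc n s z < desc_asc n s x \<and> desc_asc n s x < desc_asc n s y)"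
    if "1 \<le> x" "x < y" "y < z" "z \<le> n" for x y z
    using assms that by (auto simp: desc_asc_def)
  moreover have "\<not> (desc_asc n s x < desc_asc n s z \<and> desc_asc n s z < desc_asc n s w \<and>
                    desc_asc n s w < desc_asc n s y)"
    if "1 \<le> x" "x < y" "y < z" "z < w" "w \<le> n" for x y z w
    using assms that by (auto simp: desc_asc_def)
  moreover have "\<not> (desc_asc n s (desc_asc n s z) < desc_asc n s (desc_asc n s x) \<and>
                    desc_asc n s (desc_asc n s x) < desc_asc n s (desc_asc n s y))"
    if "1 \<le> x" "x < y" "y < z" "z \<le> n" for x y z
    using assms that by (auto simp: desc_asc_twice)
  ultimately show ?thesis unfolding Av_iff using desc_asc_permutes by blast
qed

lemma append_desc_prefix:
  assumes "a permutes {1..k}" and "i \<in> {1..k}"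
  shows "append_desc n k a i = a i" and "a i \<in> {1..k}"
  using assms permutes_in_image[OF assms(1)] by (auto simp: append_desc_def)

lemma append_desc_suffix: "i \<in> {k<..n} \<Longrightarrow> append_desc n k a i = n + k + 1 - i"
  by (simp add: append_desc_def)

lemma append_desc_permutes:
  assumes "k \<le> n" and perm: "a permutes {1..k}"
  shows "append_desc n k a permutes {1..n}"
proof (rule inj_imp_permutes)
  note prefix = append_desc_prefix[OF perm] and suffix = append_desc_suffix[of _ k n a]
  show "inj_on (append_desc n k a) {1..n}"
  proof (rule inj_onI)
    fix i j assume ij: "i \<in> {1..n}" "j \<in> {1..n}" "append_desc n k a i = append_desc n k a j"
    show "i = j"
    proof (cases "i \<le> k"; cases "j \<le> k")
      assume "i \<le> k" "j \<le> k"
      then show ?thesis using ij prefix[of i] prefix[of j] injD[OF permutes_inj[OF perm]] by auto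
    qed (use ij prefix[of i] prefix[of j] suffix[of i] suffix[of j] in auto)
  qed
  show "append_desc n k a i \<in> {1..n}" if "i \<in> {1..n}" for i
    using that prefix[of i] suffix[of i] \<open>k \<le> n\<close> by (cases "i \<le> k") auto
  show "append_desc n k a i = i" if "i \<notin> {1..n}" for i
    using that \<open>k \<le> n\<close> permutes_not_in[OF perm, of i] by (auto simp: append_desc_def)
qed simp

lemma append_desc_twice:
  assumes "a permutes {1..k}" and "i \<in> {1..n}"
  shows "append_desc n k a (append_desc n k a i) = (if i \<le> k then a (a i) else i)"
proof (cases "i \<le> k")
  case False
  then have "i \<in> {k<..n}" "n + k + 1 - i \<in> {k<..n}" using assms(2) by auto
  then show ?thesis using False append_desc_suffix by simp
next
  case True
  then show ?thesis
    using assms append_desc_prefix[OF assms(1), of i] append_desc_prefix[OF assms(1), of "a i"] by auto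
qed

lemma append_desc_in_Av:
  assumes "k \<le> n" and a: "a \<in> Av k"
  shows "append_desc n k a \<in> Av n"
proof -
  let ?p = "append_desc n k a"
  have perm: "a permutes {1..k}"
    and a231: "\<And>x y z. 1 \<le> x \<Longrightarrow> x < y \<Longrightarrow> y < z \<Longrightarrow> z \<le> k \<Longrightarrow> \<not> (a z < a x \<and> a x < a y)"
    and a1423: "\<And>x y z w. 1 \<le> x \<Longrightarrow> x < y \<Longrightarrow> y < z \<Longrightarrow> z < w \<Longrightarrow> w \<le> k \<Longrightarrow>
                   \<not> (a x < a z \<and> a z < a w \<and> a w < a y)"
    and aa231: "\<And>x y z. 1 \<le> x \<Longrightarrow> x < y \<Longrightarrow> y < z \<Longrightarrow> z \<le> k \<Longrightarrow>
                  \<not> (a (a z) < a (a x) \<and> a (a x) < a (a y))"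
    using a unfolding Av_iff by blast+
  note prefix = append_desc_prefix[OF perm] and suffix = append_desc_suffix[of _ k n a]
    and twice = append_desc_twice[OF perm]
  have "\<not> (?p z < ?p x \<and> ?p x < ?p y)" if "1 \<le> x" "x < y" "y < z" "z \<le> n" for x y z
  proof (cases "z \<le> k")
    case True
    then show ?thesis using that a231[of x y z] prefix[of x] prefix[of y] prefix[of z] by auto
  qed (use that prefix[of x] suffix[of x] suffix[of y] suffix[of z] in \<open>cases "x \<le> k"; auto\<close>)
  moreover have "\<not> (?p x < ?p z \<and> ?p z < ?p w \<and> ?p w < ?p y)"
    if "1 \<le> x" "x < y" "y < z" "z < w" "w \<le> n" for x y z w
  proof (cases "w \<le> k")
    case True
    then show ?thesis
      using that a1423[of x y z w] prefix[of x] prefix[of y] prefix[of z] prefix[of w] by auto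
  qed (use that prefix[of y] suffix[of y] suffix[of z] suffix[of w] in \<open>cases "y \<le> k"; auto\<close>)
  moreover have "\<not> (?p (?p z) < ?p (?p x) \<and> ?p (?p x) < ?p (?p y))"
    if "1 \<le> x" "x < y" "y < z" "z \<le> n" for x y z
  proof (cases "z \<le> k")
    case True
    then show ?thesis using that aa231[of x y z] twice[of x] twice[of y] twice[of z] by auto
  qed (use that twice prefix[of x] prefix[of "a x"] in auto)
  ultimately show ?thesis using append_desc_permutes[OF \<open>k \<le> n\<close> perm] unfolding Av_iff by blast
qed

lemma Av_top_later_shape:
  assumes p: "p \<in> Av n" and q: "1 < q" "q \<le> n" "p q = n"
  shows "p ` {1..q - 1} = {1..q - 1}" and "\<And>i. i \<in> {q..n} \<Longrightarrow> p i = n + q - i"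
proof -
  have perm: "p permutes {1..n}"
    and no231: "\<And>x y z. 1 \<le> x \<Longrightarrow> x < y \<Longrightarrow> y < z \<Longrightarrow> z \<le> n \<Longrightarrow> \<not> (p z < p x \<and> p x < p y)"
    and no1423: "\<And>x y z w. 1 \<le> x \<Longrightarrow> x < y \<Longrightarrow> y < z \<Longrightarrow> z < w \<Longrightarrow> w \<le> n \<Longrightarrow>
                   \<not> (p x < p z \<and> p z < p w \<and> p w < p y)"
    using p unfolding Av_iff by blast+
  have "p ` {1..n} = {1..n + 1 - 1}" "q \<in> {1..n}" "p q = n + 1 - 1"
    using permutes_image[OF perm] q by auto
  note split = max_split_avoiding_231[OF permutes_inj_on[OF perm] this no231]
  have "{1..<q} = {1..q - 1}" using q by auto
  then show left: "p ` {1..q - 1} = {1..q - 1}" using split(1) by simp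
  have right: "q \<le> p j \<and> p j \<le> n - 1" if "j \<in> {q + 1..n}" for j
    using split(2)[of j] that q by auto
  have "1 \<in> {1..q - 1}" using q by simp
  then have "p 1 \<in> p ` {1..q - 1}" by (rule imageI)
  then have p1: "p 1 < q" unfolding left by auto
  have dec: "strict_antimono_on {q + 1..n} p"
  proof (rule monotone_onI)
    fix i j assume ij: "i \<in> {q + 1..n}" "j \<in> {q + 1..n}" "i < j"
    show "p j < p i"
    proof (rule ccontr)
      assume "\<not> p j < p i"
      moreover have "p i \<noteq> p j"
        using inj_onD[OF permutes_inj_on[OF perm], of i j] ij q by auto
      ultimately have "p i < p j" by simp
      moreover have "p 1 < p i" using p1 right[OF ij(1)] by simp
      moreover have "p j < p q" using right[OF ij(2)] q by auto
      ultimately show False using no1423[of 1 q i j] ij q by simp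
    qed
  qed
  have "p ` {q + 1..n} \<subseteq> {q..n - 1}" using right by auto
  moreover have "n - 1 + (q + 1) = q + n" using q by simp
  ultimately have tail: "p i + i = n - 1 + (q + 1)" if "i \<in> {q + 1..n}" for i
    using strict_antimono_on_interval_values[OF dec] that by blast
  show "p i = n + q - i" if "i \<in> {q..n}" for i
    using that q tail[of i] by (cases "i = q") auto
qed

lemma Av_top_later:
  assumes p: "p \<in> Av n" and q: "1 < q" "q \<le> n" "p q = n"
  shows "\<exists>a \<in> Av (q - 1). p = append_desc n (q - 1) a"
proof -
  define a where "a = (\<lambda>i. if i \<in> {1..q - 1} then p i else i)"
  have "a \<in> Av (q - 1)"
    using Av_prefix[OF p _ Av_top_later_shape(1)[OF p q]] q unfolding a_def by simp
  moreover have "p = append_desc n (q - 1) a"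
  proof
    fix i show "p i = append_desc n (q - 1) a i"
      using Av_top_later_shape(2)[OF p q, of i] permutes_not_in[OF Av_permutes[OF p], of i] q
      by (auto simp: append_desc_def a_def)
  qed
  ultimately show ?thesis by blast
qed

(* The case p 1 = n: p begins with the maximal decreasing run n, ..., s + 1 of length d, and
   q is the position of s. *)
locale top_first =
  fixes n d s q :: nat and p :: "nat \<Rightarrow> nat"
  assumes Av: "p \<in> Av n"
    and run: "\<And>i. i \<in> {1..d} \<Longrightarrow> p i = n + 1 - i"
    and run_nonempty: "1 \<le> d" and n_eq: "n = d + s" and s_pos: "0 < s"
    and run_maximal: "p (d + 1) \<noteq> s"
    and peak: "d < q" "q \<le> n" "p q = s"
begin

lemma perm: "p permutes {1..n}"
  and no231: "1 \<le> x \<Longrightarrow> x < y \<Longrightarrow> y < z \<Longrightarrow> z \<le> n \<Longrightarrow> \<not> (p z < p x \<and> p x < p y)"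
  and no1423: "1 \<le> x \<Longrightarrow> x < y \<Longrightarrow> y < z \<Longrightarrow> z < w \<Longrightarrow> w \<le> n \<Longrightarrow>
                \<not> (p x < p z \<and> p z < p w \<and> p w < p y)"
  and sq_no231: "1 \<le> x \<Longrightarrow> x < y \<Longrightarrow> y < z \<Longrightarrow> z \<le> n \<Longrightarrow>
                  \<not> (p (p z) < p (p x) \<and> p (p x) < p (p y))"
  using Av unfolding Av_iff by blast+

lemma tail_image: "p ` {d + 1..n} = {1..s}"
  using image_after_top_run[OF perm run] n_eq by simp

lemma two_le_s: "2 \<le> s"
proof (rule ccontr)
  assume "\<not> 2 \<le> s"
  then have "s = 1" using s_pos by simp
  moreover have "p (d + 1) \<in> p ` {d + 1..n}" using n_eq s_pos by simp
  ultimately show False using tail_image run_maximal by simp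
qed

lemma run_before_peak: "d + 1 < q"
  using peak run_maximal by (cases "q = d + 1") auto

lemma left_of_peak: "p ` {d + 1..<q} = {1..q - d - 1}"
  and right_of_peak: "j \<in> {q<..n} \<Longrightarrow> q - d - 1 < p j \<and> p j < s"
proof -
  have inj: "inj_on p {d + 1..n}" using permutes_inj_on[OF perm] by (rule inj_on_subset) auto
  have onto: "p ` {d + 1..n} = {1..n + 1 - (d + 1)}"
    and peak': "q \<in> {d + 1..n}" "p q = n + 1 - (d + 1)"
    using tail_image peak n_eq by auto
  have "\<And>x y z. d + 1 \<le> x \<Longrightarrow> x < y \<Longrightarrow> y < z \<Longrightarrow> z \<le> n \<Longrightarrow> \<not> (p z < p x \<and> p x < p y)"
    using no231 by simp
  note split = max_split_avoiding_231[OF inj onto peak' this]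
  show "p ` {d + 1..<q} = {1..q - d - 1}" using split(1) by simp
  show "j \<in> {q<..n} \<Longrightarrow> q - d - 1 < p j \<and> p j < s" using split(2)[of j] n_eq by simp
qed

lemma first_value: "p 1 = n"
  using run[of 1] run_nonempty by simp

(* p (p r) = n is the largest value and p (p 1) = p n \<ge> q - d, so a position z after r with
   p (p z) < q - d would complete a 231 in p \<circ> p. *)
lemma late_positions_avoid_left_of_peak:
  assumes "d < r" "r < z" "z \<le> n" "p r = 1"
  shows "p z \<notin> {d + 1..<q}"
proof
  assume "p z \<in> {d + 1..<q}"
  then have "p (p z) \<in> p ` {d + 1..<q}" by blast
  then have "p (p z) < q - d" using left_of_peak run_before_peak by auto
  moreover have "q - d \<le> p n"
    using right_of_peak[of n] peak n_eq by (cases "q = n") auto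
  moreover have "p n < n"
  proof -
    have "p n \<in> p ` {d + 1..n}" using n_eq s_pos by simp
    then show ?thesis using tail_image n_eq run_nonempty by auto
  qed
  ultimately show False
    using sq_no231[of 1 r z] assms first_value run_nonempty by simp
qed

lemma position_of_one:
  obtains r where "d < r" "r < q" "p r = 1"
proof -
  have "1 \<in> p ` {d + 1..<q}" using left_of_peak run_before_peak by simp
  then obtain r where "r \<in> {d + 1..<q}" "p r = 1" by (metis imageE)
  then show ?thesis by (intro that) auto
qed

lemma right_of_peak_values:
  assumes "j \<in> {q<..n}"
  shows "p j + j = s + q"
proof -
  obtain r where r: "d < r" "r < q" "p r = 1" by (rule position_of_one)
  have dec: "strict_antimono_on {q + 1..n} p"
  proof (rule monotone_onI)
    fix i j assume ij: "i \<in> {q + 1..n}" "j \<in> {q + 1..n}" "i < j"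
    show "p j < p i"
    proof (rule ccontr)
      assume "\<not> p j < p i"
      moreover have "p i \<noteq> p j"
        using inj_onD[OF permutes_inj_on[OF perm], of i j] ij by auto
      ultimately have "p i < p j" by simp
      moreover have "1 < p i" using right_of_peak[of i] ij run_before_peak by auto
      moreover have "p j < s" using right_of_peak[of j] ij by auto
      ultimately show False using no1423[of r q i j] r ij peak run_nonempty by auto
    qed
  qed
  have range: "p ` {q + 1..n} \<subseteq> {q - d..s - 1}"
  proof (rule image_subsetI)
    fix i assume "i \<in> {q + 1..n}"
    then show "p i \<in> {q - d..s - 1}" using right_of_peak[of i] run_before_peak by auto
  qed
  have "s - 1 + (q + 1) = q - d + n" using n_eq peak two_le_s by simp
  from strict_antimono_on_interval_values[OF dec range this] assms two_le_s
  show ?thesis by simp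
qed

lemma peak_last: "q = n"
proof (rule ccontr)
  assume "q \<noteq> n"
  then have "q < n" using peak by simp
  obtain r where r: "d < r" "r < q" "p r = 1" by (rule position_of_one)
  have sq_first: "p (p 1) = q - d"
    using first_value right_of_peak_values[of n] \<open>q < n\<close> n_eq by simp
  have "q - d < s" using sq_first first_value right_of_peak[of n] \<open>q < n\<close> by simp
  consider "s \<le> d" | "d < s" "s < q" | "q \<le> s" by linarith
  then show False
  proof cases
    case 1
    have pos: "n + 1 - q \<in> {1..d}" "n + 2 - q \<in> {1..d}" "q - 1 \<in> {d + 1..<q}"
      using 1 \<open>q < n\<close> run_before_peak n_eq by auto
    have "p (p (n + 2 - q)) \<in> p ` {d + 1..<q}"
      using run[OF pos(2)] pos(3) \<open>q < n\<close> by (simp add: Suc_diff_Suc)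
    then have "p (p (n + 2 - q)) < q - d" using left_of_peak run_before_peak by auto
    moreover have "p (p (n + 1 - q)) = s" using run[OF pos(1)] peak by simp
    moreover have "\<not> (p (p (n + 2 - q)) < p (p 1) \<and> p (p 1) < p (p (n + 1 - q)))"
      by (rule sq_no231) (use \<open>q < n\<close> run_before_peak in auto)
    ultimately show False using sq_first \<open>q - d < s\<close> by simp
  next
    case 2
    then show False using late_positions_avoid_left_of_peak[of r q] r peak by simp
  next
    case 3
    have "s + 1 \<in> {q<..n}" using 3 n_eq run_nonempty by simp
    from right_of_peak_values[OF this] have "p (s + 1) = q - 1" by simp
    then show False
      using late_positions_avoid_left_of_peak[of r "s + 1"] r 3 n_eq run_nonempty run_before_peak
      by simp
  qed
qed

lemma tail_le_run: "s \<le> d"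
proof (rule ccontr)
  assume "\<not> s \<le> d"
  obtain r where r: "d < r" "r < q" "p r = 1" by (rule position_of_one)
  have "p n \<in> {d + 1..<q}" using \<open>\<not> s \<le> d\<close> peak peak_last n_eq run_nonempty by simp
  then show False using late_positions_avoid_left_of_peak[of r n] r peak_last by simp
qed

lemma tail_increasing: "strict_mono_on {d + 1..n - 1} p"
proof (rule monotone_onI)
  fix i j assume ij: "i \<in> {d + 1..n - 1}" "j \<in> {d + 1..n - 1}" "i < j"
  have small: "p x < s" if "x \<in> {d + 1..n - 1}" for x
  proof -
    have "p x \<in> p ` {d + 1..<q}" using that peak_last run_before_peak by auto
    then show ?thesis using left_of_peak peak_last n_eq by auto
  qed
  have positive: "1 \<le> p i" "1 \<le> p j" using tail_image ij by force+
  show "p i < p j"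
  proof (rule ccontr)
    assume "\<not> p i < p j"
    moreover have "p i \<noteq> p j"
      using inj_onD[OF permutes_inj_on[OF perm], of i j] ij by auto
    ultimately have "p j < p i" by simp
    then have "p (p i) < p (p j)"
      using run[of "p i"] run[of "p j"] positive small[OF ij(1)] tail_le_run n_eq by simp
    moreover have "p (p n) < p (p i)"
      using run[of s] run[of "p i"] positive peak peak_last small[OF ij(1)] tail_le_run two_le_s
        n_eq by auto
    moreover have "\<not> (p (p n) < p (p i) \<and> p (p i) < p (p j))"
      by (rule sq_no231) (use ij n_eq run_nonempty in auto)
    ultimately show False by simp
  qed
qed

lemma eq_desc_asc: "p = desc_asc n s"
proof
  fix i
  have tail: "p i + (d + 1) = 1 + i" if "i \<in> {d + 1..n - 1}"
  proof -
    have "{d + 1..n - 1} = {d + 1..<q}" using peak_last n_eq s_pos by auto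
    then have "p ` {d + 1..n - 1} \<subseteq> {1..s - 1}" using left_of_peak peak_last n_eq by simp
    moreover have "s - 1 + (d + 1) = 1 + (n - 1)" using n_eq two_le_s by simp
    ultimately show ?thesis using strict_mono_on_interval_values[OF tail_increasing] that by blast
  qed
  consider "i \<notin> {1..n}" | "i \<in> {1..d}" | "i \<in> {d + 1..n - 1}" | "i = n"
    using n_eq s_pos by force
  then show "p i = desc_asc n s i"
  proof cases
    case 1
    then show ?thesis using permutes_not_in[OF perm] by (auto simp: desc_asc_def)
  next
    case 2
    then show ?thesis using run[of i] n_eq by (simp add: desc_asc_def)
  next
    case 3
    then show ?thesis using tail n_eq two_le_s by (auto simp: desc_asc_def)
  next
    case 4
    then show ?thesis using peak peak_last n_eq s_pos by (simp add: desc_asc_def)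
  qed
qed

end

lemma Av_top_first:
  assumes p: "p \<in> Av n" and "1 \<le> n" and first: "p 1 = n"
  shows "\<exists>s \<in> tail_lengths n. p = desc_asc n s"
proof -
  note perm = Av_permutes[OF p]
  obtain d where d: "1 \<le> d" "d \<le> n" and run: "\<And>i. i \<in> {1..d} \<Longrightarrow> p i = n + 1 - i"
    and maximal: "d < n \<Longrightarrow> p (d + 1) \<noteq> n - d"
    using maximal_top_run[of p n, OF first \<open>1 \<le> n\<close>] by blast
  show ?thesis
  proof (cases "d = n")
    case True
    have "p = desc_asc n 0"
      using run permutes_not_in[OF perm] True by (auto simp: desc_asc_def)
    then show ?thesis by (intro bexI[of _ 0]) (auto simp: tail_lengths_def)
  next
    case False
    have "n - d \<in> p ` {d + 1..n}"
      using image_after_top_run[OF perm run d(2)] False d by simp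
    then obtain q where "q \<in> {d + 1..n}" "p q = n - d" by (metis imageE)
    then interpret top_first n d "n - d" q p
      using p run d maximal False by unfold_locales auto
    show ?thesis
      using eq_desc_asc tail_le_run two_le_s by (intro bexI[of _ "n - d"]) (auto simp: tail_lengths_def)
  qed
qed

lemma Av_decomposition:
  assumes "1 \<le> n"
  shows "Av n = desc_asc n ` tail_lengths n \<union> (\<Union>k \<in> {1..<n}. append_desc n k ` Av k)"
proof
  show "Av n \<subseteq> desc_asc n ` tail_lengths n \<union> (\<Union>k \<in> {1..<n}. append_desc n k ` Av k)"
  proof
    fix p assume p: "p \<in> Av n"
    then have "n \<in> p ` {1..n}" using assms permutes_image[OF Av_permutes[OF p]] by simp
    then obtain q where q: "q \<in> {1..n}" "p q = n" by (metis imageE)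
    show "p \<in> desc_asc n ` tail_lengths n \<union> (\<Union>k \<in> {1..<n}. append_desc n k ` Av k)"
    proof (cases "q = 1")
      case True
      then show ?thesis using Av_top_first[OF p assms] q by auto
    next
      case False
      then show ?thesis using Av_top_later[OF p, of q] q by force
    qed
  qed
  show "desc_asc n ` tail_lengths n \<union> (\<Union>k \<in> {1..<n}. append_desc n k ` Av k) \<subseteq> Av n"
    using desc_asc_in_Av append_desc_in_Av by (auto simp: tail_lengths_def)
qed

section \<open>Counting\<close>

lemma finite_Av: "finite (Av n)"
proof (rule finite_subset)
  show "Av n \<subseteq> {p. p permutes {1..n}}" using Av_permutes by blast
qed (simp add: finite_permutations)

lemma finite_tail_lengths: "finite (tail_lengths n)"
  by (rule finite_subset[of _ "{..n}"]) (auto simp: tail_lengths_def)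

lemma inj_on_desc_asc:
  assumes "1 \<le> n"
  shows "inj_on (desc_asc n) (tail_lengths n)"
proof (rule inj_onI)
  fix s t assume st: "s \<in> tail_lengths n" "t \<in> tail_lengths n" "desc_asc n s = desc_asc n t"
  have last: "desc_asc n u n = (if u = 0 then 1 else u)" if "u \<in> tail_lengths n" for u
  proof (cases "u = 0")
    case False
    then have "\<not> n \<le> n - u" "u \<le> n" using that by (auto simp: tail_lengths_def)
    then show ?thesis using False by (simp add: desc_asc_def)
  qed (use assms in \<open>simp add: desc_asc_def\<close>)
  have "(if s = 0 then 1 else s) = (if t = 0 then 1 else t)"
    using fun_cong[OF st(3), of n] last[OF st(1)] last[OF st(2)] by simp
  moreover have "s \<noteq> 1" "t \<noteq> 1" using st(1,2) by (simp_all add: tail_lengths_def)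
  ultimately show "s = t" by (cases "s = 0"; cases "t = 0") simp_all
qed

lemma inj_on_append_desc: "inj_on (append_desc n k) (Av k)"
proof (rule inj_onI)
  fix a b assume ab: "a \<in> Av k" "b \<in> Av k" "append_desc n k a = append_desc n k b"
  show "a = b"
  proof
    fix i
    show "a i = b i"
    proof (cases "i \<in> {k<..n}")
      case True
      then show ?thesis
        using permutes_not_in[OF Av_permutes[OF ab(1)]] permutes_not_in[OF Av_permutes[OF ab(2)]]
        by simp
    next
      case False
      then show ?thesis
        using fun_cong[OF ab(3), of i] by (simp add: append_desc_def del: greaterThanAtMost_iff)
    qed
  qed
qed

lemma card_Av:
  assumes "1 \<le> n"
  shows "card (Av n) = card (tail_lengths n) + (\<Sum>k = 1..<n. card (Av k))"
proof -
  let ?A = "\<lambda>k. append_desc n k ` Av k"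
  have last: "p n = k + 1" if "p \<in> ?A k" "k < n" for p k
    using that by (auto simp: append_desc_def)
  have "desc_asc n s 1 = n" if "s \<in> tail_lengths n" for s
    using that assms by (auto simp: desc_asc_def tail_lengths_def)
  moreover have "append_desc n k a 1 < n" if "k \<in> {1..<n}" "a \<in> Av k" for k a
    using that permutes_in_image[OF Av_permutes[OF that(2)], of 1] by (auto simp: append_desc_def)
  ultimately have disjoint: "desc_asc n ` tail_lengths n \<inter> (\<Union>k \<in> {1..<n}. ?A k) = {}"
    by fastforce
  have "card (\<Union>k \<in> {1..<n}. ?A k) = (\<Sum>k = 1..<n. card (?A k))"
  proof (rule card_UN_disjoint)
    show "\<forall>k \<in> {1..<n}. \<forall>l \<in> {1..<n}. k \<noteq> l \<longrightarrow> ?A k \<inter> ?A l = {}"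
      using last by (metis (no_types, lifting) IntE add_right_cancel atLeastLessThan_iff equals0I)
  qed (auto simp: finite_Av)
  also have "\<dots> = (\<Sum>k = 1..<n. card (Av k))"
    by (intro sum.cong refl card_image inj_on_append_desc)
  finally have "card (\<Union>k \<in> {1..<n}. ?A k) = (\<Sum>k = 1..<n. card (Av k))" .
  moreover have "card (desc_asc n ` tail_lengths n) = card (tail_lengths n)"
    by (rule card_image[OF inj_on_desc_asc[OF assms]])
  moreover have "finite (\<Union>k \<in> {1..<n}. ?A k)" by (simp add: finite_Av)
  ultimately show ?thesis
    unfolding Av_decomposition[OF assms]
    using card_Un_disjoint[OF finite_imageI[OF finite_tail_lengths] _ disjoint] by simp
qed

lemma card_tail_lengths: "2 \<le> n \<Longrightarrow> card (tail_lengths n) = n div 2"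
proof -
  assume "2 \<le> n"
  have "tail_lengths n = insert 0 {2..n div 2}" by (auto simp: tail_lengths_def)
  then show ?thesis using \<open>2 \<le> n\<close> by simp
qed

lemma card_Av_Suc:
  assumes "2 \<le> n"
  shows "card (Av (n + 1)) + n div 2 = (n + 1) div 2 + 2 * card (Av n)"
  using card_Av[of "n + 1"] card_Av[of n] card_tail_lengths[of n] card_tail_lengths[of "n + 1"] assms
  by simp

lemma card_Av_1: "card (Av 1) = 1"
proof -
  have "tail_lengths 1 = {0}" by (auto simp: tail_lengths_def)
  then show ?thesis using card_Av[of 1] by simp
qed

lemma card_Av_2: "card (Av 2) = 2"
proof -
  have "tail_lengths 2 = {0}" "{1..<2::nat} = {1}" by (auto simp: tail_lengths_def)
  then show ?thesis using card_Av[of 2] card_Av_1 by simp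
qed

lemma card_Av_closed_form:
  "3 * card (Av (2 * m + 2)) + 1 = 7 * 4 ^ m \<and> card (Av (2 * m + 3)) = 2 * card (Av (2 * m + 2))"
proof (induction m)
  case 0
  have "2 * 0 + 2 = (2::nat)" "2 * 0 + 3 = (2 + 1::nat)" by simp_all
  then show ?case using card_Av_Suc[of 2] card_Av_2 by (simp only:) simp
next
  case (Suc m)
  have idx: "2 * Suc m + 2 = 2 * m + 3 + 1" "2 * Suc m + 3 = (2 * m + 3 + 1) + 1" by simp_all
  have "(2 * m + 3) div 2 = m + 1" "(2 * m + 3 + 1) div 2 = m + 2" "(2 * m + 3 + 1 + 1) div 2 = m + 2"
    by presburger+
  then have "card (Av (2 * m + 3 + 1)) + (m + 1) = (m + 2) + 2 * card (Av (2 * m + 3))"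
    and "card (Av (2 * m + 3 + 1 + 1)) + (m + 2) = (m + 2) + 2 * card (Av (2 * m + 3 + 1))"
    using card_Av_Suc[of "2 * m + 3"] card_Av_Suc[of "2 * m + 3 + 1"] by simp_all
  then show ?case unfolding idx using Suc.IH by simp
qed

lemma card_Av_even:
  assumes "1 \<le> k"
  shows "real (card (Av (2 * k))) = 7 / 3 * 4 ^ (k - 1) - 1 / 3"
proof -
  obtain m where "k = m + 1" using assms by (metis le_add_diff_inverse2)
  then have idx: "2 * k = 2 * m + 2" "k - 1 = m" by simp_all
  have "3 * card (Av (2 * m + 2)) + 1 = 7 * 4 ^ m" using card_Av_closed_form[of m] by simp
  then have "real (3 * card (Av (2 * m + 2)) + 1) = real (7 * 4 ^ m)" by (rule arg_cong)
  then have "3 * real (card (Av (2 * m + 2))) + 1 = 7 * 4 ^ m" by simp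
  then show ?thesis unfolding idx by linarith
qed

lemma card_Av_odd:
  assumes "1 \<le> k"
  shows "real (card (Av (2 * k + 1))) = 14 / 3 * 4 ^ (k - 1) - 2 / 3"
proof -
  obtain m where "k = m + 1" using assms by (metis le_add_diff_inverse2)
  then have idx: "2 * k + 1 = 2 * m + 3" "k - 1 = m" by simp_all
  have "3 * card (Av (2 * m + 3)) + 2 = 14 * 4 ^ m" using card_Av_closed_form[of m] by simp
  then have "real (3 * card (Av (2 * m + 3)) + 2) = real (14 * 4 ^ m)" by (rule arg_cong)
  then have "3 * real (card (Av (2 * m + 3))) + 2 = 14 * 4 ^ m" by simp
  then show ?thesis unfolding idx by linarith
qed

theorem theorem4p2:
  fixes n :: nat
  assumes "n > 1"
  shows "c n [2,3,1] [1,4,2,3] [2,3,1] = c n [3,1,2] [2,3,1,4] [3,1,2]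
       \<and> (\<forall>k::nat. n = 2 * k \<longrightarrow>
            real (c n [2,3,1] [1,4,2,3] [2,3,1]) = 7 / 3 * 4 ^ (k - 1) - 1 / 3)
       \<and> (\<forall>k::nat. n = 2 * k + 1 \<longrightarrow>
            real (c n [2,3,1] [1,4,2,3] [2,3,1]) = 14 / 3 * 4 ^ (k - 1) - 2 / 3)"
proof -
  have "revcomp_pattern [2,3,1] = [3,1,2]" "revcomp_pattern [1,4,2,3] = [2,3,1,4]"
    by (simp_all add: revcomp_pattern_def)
  then have "c n [3,1,2] [2,3,1,4] [3,1,2] = c n [2,3,1] [1,4,2,3] [2,3,1]"
    using c_revcomp_pattern[of "[2,3,1]" "[1,4,2,3]" "[2,3,1]" n] by simp
  moreover have "c n [2,3,1] [1,4,2,3] [2,3,1] = card (Av n)" by (simp add: c_def Av_def)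
  moreover have "1 \<le> k" if "n = 2 * k \<or> n = 2 * k + 1" for k using that assms by auto
  ultimately show ?thesis using card_Av_even card_Av_odd by auto
qed

end
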